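(* Let $\mathcal{F}$ be a set of predictors, let $\mathcal{Z}$ be a finite nonempty set of groups, and let $\mathcal{L}:\mathcal{F}\to\mathbb{R}$ and $\overline{\mathcal{L}}_z:\mathcal{F}\to\mathbb{R}$ ($z\in\mathcal{Z}$) be given functionals. For $\lambda\in[0,1]$ define $$J_\lambda(f) = (1-\lambda)\,\mathcal{L}(f) + \lambda \max_{z\in\mathcal{Z}} \overline{\mathcal{L}}_z(f).$$ Let $1\ge \overline{\lambda} > \underline{\lambda} > 0$, and let $\overline{f}\in\mathcal{F}$ minimize $J_{\overline{\lambda}}$ over $\mathcal{F}$ and $\underline{f}\in\mathcal{F}$ minimize $J_{\underline{\lambda}}$ over $\mathcal{F}$. Then $$\max_{z\in\mathcal{Z}} \overline{\mathcal{L}}_z(\overline{f}) - \mathcal{L}(\overline{f}) \;\le\; \max_{z\in\mathcal{Z}} \overline{\mathcal{L}}_z(\underline{f}) - \mathcal{L}(\underline{f}).$$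
   Context: This is the min-max fairness objective: $\mathcal{L}(f)$ is the overall (average over all samples) loss of predictor $f$ on a dataset and $\overline{\mathcal{L}}_z(f)$ is the loss of $f$ restricted to group $z$. Minimizing $J_\lambda$ is equivalent to the constrained problem $\min_{f,\epsilon} (1-\lambda)\mathcal{L}(f)+\lambda\epsilon$ subject to $\overline{\mathcal{L}}_z(f)\le\epsilon$ for all $z\in\mathcal{Z}$. The quantity $\max_z \overline{\mathcal{L}}_z(f)-\mathcal{L}(f)$ is the gap between the worst group-wise loss and the overall loss. *)

theory Defs
  imports Main "HOL.Real"
begin

definition worst_loss :: "'z set \<Rightarrow> ('z \<Rightarrow> 'f \<Rightarrow> real) \<Rightarrow> 'f \<Rightarrow> real" where
  "worst_loss Z Lz f = Max ((\<lambda>z. Lz z f) ` Z)"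

definition J :: "real \<Rightarrow> ('f \<Rightarrow> real) \<Rightarrow> 'z set \<Rightarrow> ('z \<Rightarrow> 'f \<Rightarrow> real) \<Rightarrow> 'f \<Rightarrow> real" where
  "J lam L Z Lz f = (1 - lam) * L f + lam * worst_loss Z Lz f"

end

theory Submission
  imports Defs
begin

text \<open>Writing \<open>J\<^sub>\<lambda> = L + \<lambda> (worst_loss - L)\<close>, both minimizers are minimizers of an objective
  of the form \<open>A + \<lambda> B\<close> with \<open>B\<close> the fairness gap. Adding the two optimality inequalities
  cancels \<open>A\<close> and leaves \<open>(\<lambda>\<^sub>h\<^sub>i - \<lambda>\<^sub>l\<^sub>o) B(f\<^sub>h\<^sub>i) \<le> (\<lambda>\<^sub>h\<^sub>i - \<lambda>\<^sub>l\<^sub>o) B(f\<^sub>l\<^sub>o)\<close>, so the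
  penalized quantity can only decrease as its weight grows.\<close>

lemma penalty_antimono_in_weight:
  fixes A B :: "'a \<Rightarrow> real"
  assumes "lam_lo < lam_hi"
    and "A x_hi + lam_hi * B x_hi \<le> A x_lo + lam_hi * B x_lo"
    and "A x_lo + lam_lo * B x_lo \<le> A x_hi + lam_lo * B x_hi"
  shows "B x_hi \<le> B x_lo"
proof -
  from assms(2,3) have "(lam_hi - lam_lo) * B x_hi \<le> (lam_hi - lam_lo) * B x_lo"
    by (simp add: algebra_simps)
  with assms(1) show ?thesis by simp
qed

lemma J_eq_loss_plus_gap:
  "J lam L Z Lz f = L f + lam * (worst_loss Z Lz f - L f)"
  by (simp add: J_def algebra_simps)

theorem theorem2:
  fixes F :: "'f set" and Z :: "'z set"
    and L :: "'f \<Rightarrow> real" and Lz :: "'z \<Rightarrow> 'f \<Rightarrow> real"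
    and lam_hi lam_lo :: real and f_hi f_lo :: 'f
  assumes "finite Z" and "Z \<noteq> {}"
    and "lam_hi \<le> 1" and "lam_lo < lam_hi" and "0 < lam_lo"
    and "f_hi \<in> F" and "\<And>f. f \<in> F \<Longrightarrow> J lam_hi L Z Lz f_hi \<le> J lam_hi L Z Lz f"
    and "f_lo \<in> F" and "\<And>f. f \<in> F \<Longrightarrow> J lam_lo L Z Lz f_lo \<le> J lam_lo L Z Lz f"
  shows "worst_loss Z Lz f_hi - L f_hi \<le> worst_loss Z Lz f_lo - L f_lo"
proof (rule penalty_antimono_in_weight[where A = L and B = "\<lambda>f. worst_loss Z Lz f - L f"])
  show "lam_lo < lam_hi" by fact
  show "L f_hi + lam_hi * (worst_loss Z Lz f_hi - L f_hi)
      \<le> L f_lo + lam_hi * (worst_loss Z Lz f_lo - L f_lo)"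
    using assms(7)[OF \<open>f_lo \<in> F\<close>] by (simp only: J_eq_loss_plus_gap)
  show "L f_lo + lam_lo * (worst_loss Z Lz f_lo - L f_lo)
      \<le> L f_hi + lam_lo * (worst_loss Z Lz f_hi - L f_hi)"
    using assms(9)[OF \<open>f_hi \<in> F\<close>] by (simp only: J_eq_loss_plus_gap)
qed

end
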